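(* Let $L_t,M_t:(-\epsilon,\epsilon)\to SU(3)$ be smooth paths, and let $L'_0=L_0^{-1}\frac{dL_t}{dt}\big|_{t=0}$. Assume $$L_0=\begin{pmatrix}\lambda&0&0\\0&\lambda&0\\0&0&\lambda^{-2}\end{pmatrix},\qquad L'_0=\begin{pmatrix}i\alpha&0&0\\0&-i\alpha&0\\0&0&0\end{pmatrix},$$ where $\lambda$ is a complex number of modulus one and of infinite multiplicative order, and $\alpha\neq0$ is real. If $\frac{d}{dt}\mathrm{tr}(W_t)\big|_{t=0}=0$ for every word $W_t$ in $L_t$ and $M_t$, then $M_0\in G_\eta$ for some $\eta\in[0,2\pi)$.
   Context: A word in $L_t,M_t$ is a finite product of the matrices $L_t^{\pm1},M_t^{\pm1}$. For $\eta\in[0,2\pi)$, $G_\eta$ is the subgroup of $SU(3)$ consisting of matrices of the form $\begin{pmatrix}a&be^{-i\eta}&c\\ be^{i\eta}&a&ce^{i\eta}\\ c'&c'e^{-i\eta}&d\end{pmatrix}$ with $a,b,c,c',d\in\mathbb{C}$. *)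

theory Defs
  imports "HOL-Analysis.Analysis"
begin

type_synonym cmat3 = "complex^3^3"

definition mat3 :: "complex \<Rightarrow> complex \<Rightarrow> complex \<Rightarrow> complex \<Rightarrow> complex \<Rightarrow> complex
    \<Rightarrow> complex \<Rightarrow> complex \<Rightarrow> complex \<Rightarrow> cmat3" where
  "mat3 a11 a12 a13 a21 a22 a23 a31 a32 a33 =
     vector [vector [a11, a12, a13], vector [a21, a22, a23], vector [a31, a32, a33]]"

definition adj3 :: "cmat3 \<Rightarrow> cmat3" where
  "adj3 A = (\<chi> i j. cnj (A $ j $ i))"

definition SU3 :: "cmat3 set" where
  "SU3 = {A. A ** adj3 A = mat 1 \<and> det A = 1}"

definition G_eta :: "real \<Rightarrow> cmat3 set" where
  "G_eta eta = {A \<in> SU3. \<exists>a b c c' d.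
      A = mat3 a (b * cis (-eta)) c
               (b * cis eta) a (c * cis eta)
               c' (c' * cis (-eta)) d}"

definition smooth_on :: "real set \<Rightarrow> (real \<Rightarrow> 'a::real_normed_vector) \<Rightarrow> bool" where
  "smooth_on S f \<longleftrightarrow> (\<exists>D. D 0 = f \<and>
      (\<forall>k. \<forall>t\<in>S. (D k has_vector_derivative D (Suc k) t) (at t within S)))"

datatype letter = Lp | Li | Mp | Mi

fun letter_val :: "(real \<Rightarrow> cmat3) \<Rightarrow> (real \<Rightarrow> cmat3) \<Rightarrow> letter \<Rightarrow> real \<Rightarrow> cmat3" where
  "letter_val L M Lp t = L t"
| "letter_val L M Li t = matrix_inv (L t)"
| "letter_val L M Mp t = M t"
| "letter_val L M Mi t = matrix_inv (M t)"

fun word_val :: "(real \<Rightarrow> cmat3) \<Rightarrow> (real \<Rightarrow> cmat3) \<Rightarrow> letter list \<Rightarrow> real \<Rightarrow> cmat3" where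
  "word_val L M [] t = mat 1"
| "word_val L M (x # xs) t = letter_val L M x t ** word_val L M xs t"

end

theory Submission
  imports Defs
begin

text \<open>Let \<open>X = diag(i alpha, -i alpha, 0)\<close> and \<open>Y = X M_0 - M_0 X\<close>. As \<open>L_0\<close> is diagonal and
  commutes with \<open>X\<close>, the derivative at \<open>0\<close> of \<open>tr(L^n M L^-n B)\<close> is
  \<open>n tr(L_0^n Y L_0^-n B_0)\<close> plus terms of the same shape without the factor \<open>n\<close>.
  Conjugation by \<open>L_0^n\<close> scales the entries of \<open>Y\<close> by \<open>1\<close>, \<open>lambda^3n\<close> or \<open>lambda^-3n\<close>,
  so the derivative is \<open>n (a + p z^n + q z^-n) + (a' + p' z^n + q' z^-n)\<close> with \<open>z = lambda^3\<close>.
  Since \<open>|z| = 1\<close> and \<open>z^2 \<noteq> 1\<close>, its vanishing for all \<open>n\<close> forces \<open>a = p = q = 0\<close>.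
  For \<open>B = M^-1, M, M^2\<close>, and similarly for the word \<open>L^n M\<close>, this yields
  \<open>m11 = m22\<close>, \<open>|m12| = |m21|\<close>, \<open>|m13| = |m23|\<close>, \<open>|m31| = |m32|\<close>, \<open>m13 m31 = m23 m32\<close> and
  \<open>m12 m23 m31 = m21 m13 m32\<close>. Together with the unitarity of \<open>M_0\<close> these place \<open>M_0\<close> in
  \<open>G_eta\<close>, with \<open>e^(i eta) = m23 / m13\<close> (or \<open>e^(2 i eta) = m21 / m12\<close> when \<open>m13 = 0\<close>).\<close>

lemma mat3_nth [simp]:
  "mat3 a11 a12 a13 a21 a22 a23 a31 a32 a33 $ 1 $ 1 = a11"
  "mat3 a11 a12 a13 a21 a22 a23 a31 a32 a33 $ 1 $ 2 = a12"
  "mat3 a11 a12 a13 a21 a22 a23 a31 a32 a33 $ 1 $ 3 = a13"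
  "mat3 a11 a12 a13 a21 a22 a23 a31 a32 a33 $ 2 $ 1 = a21"
  "mat3 a11 a12 a13 a21 a22 a23 a31 a32 a33 $ 2 $ 2 = a22"
  "mat3 a11 a12 a13 a21 a22 a23 a31 a32 a33 $ 2 $ 3 = a23"
  "mat3 a11 a12 a13 a21 a22 a23 a31 a32 a33 $ 3 $ 1 = a31"
  "mat3 a11 a12 a13 a21 a22 a23 a31 a32 a33 $ 3 $ 2 = a32"
  "mat3 a11 a12 a13 a21 a22 a23 a31 a32 a33 $ 3 $ 3 = a33"
  by (simp_all add: mat3_def)

lemma mat3_eq_iff:
  "(A::cmat3) = mat3 a11 a12 a13 a21 a22 a23 a31 a32 a33 \<longleftrightarrow>
     A$1$1 = a11 \<and> A$1$2 = a12 \<and> A$1$3 = a13 \<and> A$2$1 = a21 \<and> A$2$2 = a22 \<and> A$2$3 = a23 \<and>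
     A$3$1 = a31 \<and> A$3$2 = a32 \<and> A$3$3 = a33"
  by (auto simp: vec_eq_iff forall_3)

lemma mat3_entries:
  "(A::cmat3) = mat3 (A$1$1) (A$1$2) (A$1$3) (A$2$1) (A$2$2) (A$2$3) (A$3$1) (A$3$2) (A$3$3)"
  by (simp add: mat3_eq_iff)

lemma mat3_mult:
  "mat3 a11 a12 a13 a21 a22 a23 a31 a32 a33 ** mat3 b11 b12 b13 b21 b22 b23 b31 b32 b33 =
   mat3 (a11*b11+a12*b21+a13*b31) (a11*b12+a12*b22+a13*b32) (a11*b13+a12*b23+a13*b33)
        (a21*b11+a22*b21+a23*b31) (a21*b12+a22*b22+a23*b32) (a21*b13+a22*b23+a23*b33)
        (a31*b11+a32*b21+a33*b31) (a31*b12+a32*b22+a33*b32) (a31*b13+a32*b23+a33*b33)"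
  by (simp add: mat3_eq_iff matrix_matrix_mult_def sum_3)

lemma trace_mat3: "trace (mat3 a11 a12 a13 a21 a22 a23 a31 a32 a33) = a11 + a22 + a33"
  by (simp add: trace_def sum_3)

lemma adj3_mat3:
  "adj3 (mat3 a11 a12 a13 a21 a22 a23 a31 a32 a33) =
   mat3 (cnj a11) (cnj a21) (cnj a31) (cnj a12) (cnj a22) (cnj a32) (cnj a13) (cnj a23) (cnj a33)"
  by (simp add: mat3_eq_iff adj3_def)

lemma mat3_one: "(mat 1 :: cmat3) = mat3 1 0 0 0 1 0 0 0 1"
  by (simp add: mat3_eq_iff mat_def)

lemma matrix_add_rdistrib: "((B::'a::semiring_1^'n^'m) + C) ** A = B ** A + C ** A"
  by (simp add: vec_eq_iff matrix_matrix_mult_def sum.distrib algebra_simps)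

lemma matrix_diff_rdistrib: "((B::'a::ring_1^'n^'m) - C) ** A = B ** A - C ** A"
  by (simp add: vec_eq_iff matrix_matrix_mult_def sum_subtractf algebra_simps)

lemma matrix_diff_ldistrib: "(A::'a::ring_1^'n^'m) ** (B - C) = A ** B - A ** C"
  by (simp add: vec_eq_iff matrix_matrix_mult_def sum_subtractf algebra_simps)

lemma matrix_mul_uminus_left: "(- A :: 'a::ring_1^'n^'m) ** B = - (A ** B)"
  by (simp add: vec_eq_iff matrix_matrix_mult_def sum_negf)

lemma matrix_mul_uminus_right: "(A :: 'a::ring_1^'n^'m) ** - B = - (A ** B)"
  by (simp add: vec_eq_iff matrix_matrix_mult_def sum_negf)

lemma trace_scaleR: "trace (c *\<^sub>R (A::complex^'n^'n)) = c *\<^sub>R trace A"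
  by (simp add: trace_def scaleR_sum_right)

lemma bounded_bilinear_matrix_mult:
  "bounded_bilinear (\<lambda>(A::complex^'n^'m) (B::complex^'k^'n). A ** B)"
proof -
  have "bilinear (\<lambda>(A::complex^'n^'m) (B::complex^'k^'n). A ** B)"
    by (auto intro!: linearI simp: bilinear_def matrix_add_ldistrib matrix_add_rdistrib
        scalar_matrix_assoc matrix_scalar_ac)
  then show ?thesis by (simp add: bilinear_conv_bounded_bilinear)
qed

lemma bounded_linear_trace: "bounded_linear (trace :: complex^'n^'n \<Rightarrow> complex)"
  by (auto intro!: linearI simp: linear_conv_bounded_linear[symmetric] trace_def sum.distrib
      scaleR_sum_right)

lemma bounded_linear_adj3: "bounded_linear adj3"
  by (auto intro!: linearI simp: linear_conv_bounded_linear[symmetric] adj3_def vec_eq_iff)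

lemma matrix_inv_eqI: "(A::'a::field^'n^'n) ** B = mat 1 \<Longrightarrow> matrix_inv A = B"
  by (metis (mono_tags, lifting) matrix_inv_def matrix_left_right_inverse matrix_mul_assoc
      matrix_mul_lid someI)

lemma matrix_inv_SU3: "A \<in> SU3 \<Longrightarrow> matrix_inv A = adj3 A"
  by (simp add: SU3_def matrix_inv_eqI)

section \<open>Sequences \<open>a + p z^n + q z^-n\<close> on the unit circle\<close>

lemma trinomial_coeff_eq_zero_if_tendsto_zero:
  fixes z a p q :: complex
  assumes "cmod z = 1" and "z^2 \<noteq> 1"
    and lim: "(\<lambda>n. a + p * z^n + q * inverse z ^ n) \<longlonglongrightarrow> 0"
  shows "p = 0"
proof -
  define g where "g n = a + p * z^n + q * inverse z ^ n" for n
  have "z \<noteq> 0" using assms(1) by auto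
  \<comment> \<open>the difference operator \<open>(E - 1)(E - z^-1)\<close>, \<open>E\<close> the shift, annihilates \<open>a + q z^-n\<close>\<close>
  have recurrence: "g (n+2) - (1 + inverse z) * g (n+1) + inverse z * g n =
      p * z^n * ((z - 1) * (z - inverse z))" for n
    using \<open>z \<noteq> 0\<close> by (simp add: g_def field_simps power_add)
  have "(\<lambda>n. g (n+2) - (1 + inverse z) * g (n+1) + inverse z * g n)
      \<longlonglongrightarrow> 0 - (1 + inverse z) * 0 + inverse z * 0"
    using lim unfolding g_def[abs_def] by (intro tendsto_intros LIMSEQ_ignore_initial_segment)
  then have "(\<lambda>n. norm (p * z^n * ((z - 1) * (z - inverse z)))) \<longlonglongrightarrow> 0"
    unfolding recurrence by (simp add: tendsto_norm_zero)
  then have "norm (p * ((z - 1) * (z - inverse z))) = 0"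
    using assms(1) by (simp add: norm_mult norm_power LIMSEQ_const_iff)
  moreover have "z - inverse z \<noteq> 0"
    using \<open>z \<noteq> 0\<close> assms(2) by (auto simp: field_simps power2_eq_square)
  moreover have "z \<noteq> 1" using assms(2) by auto
  ultimately show ?thesis by simp
qed

lemma trinomial_eq_zero_if_tendsto_zero:
  fixes z a p q :: complex
  assumes "cmod z = 1" and "z^2 \<noteq> 1"
    and lim: "(\<lambda>n. a + p * z^n + q * inverse z ^ n) \<longlonglongrightarrow> 0"
  shows "a = 0 \<and> p = 0 \<and> q = 0"
proof -
  have p: "p = 0" using trinomial_coeff_eq_zero_if_tendsto_zero[OF assms] .
  have "(\<lambda>n. a + q * inverse z ^ n + p * inverse (inverse z) ^ n) \<longlonglongrightarrow> 0"
    using lim by (simp add: add_ac)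
  then have q: "q = 0"
    using assms(1,2) by (intro trinomial_coeff_eq_zero_if_tendsto_zero[of "inverse z"])
      (auto simp: norm_inverse power_inverse)
  show ?thesis using lim by (simp add: p q LIMSEQ_const_iff)
qed

lemma trinomial_eq_zero_if_linear_growth_cancels:
  fixes z a p q a' p' q' :: complex
  assumes "cmod z = 1" and "z^2 \<noteq> 1"
    and cancel: "\<And>n. of_nat n * (a + p * z^n + q * inverse z ^ n)
      + (a' + p' * z^n + q' * inverse z ^ n) = 0"
  shows "a = 0 \<and> p = 0 \<and> q = 0"
proof (rule trinomial_eq_zero_if_tendsto_zero[OF assms(1,2)])
  define K where "K = cmod a' + cmod p' + cmod q'"
  have "norm (a + p * z^n + q * inverse z ^ n) \<le> K / real n" if "n > 0" for n
  proof -
    have "real n * norm (a + p * z^n + q * inverse z ^ n)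
        = norm (a' + p' * z^n + q' * inverse z ^ n)"
      using cancel[of n] by (metis add_eq_0_iff norm_minus_cancel norm_mult norm_of_nat)
    also have "\<dots> \<le> K"
      using assms(1) norm_triangle_ineq[of a' "p' * z^n"]
        norm_triangle_ineq[of "a' + p' * z^n" "q' * inverse z ^ n"]
      by (simp add: K_def norm_mult norm_power norm_inverse)
    finally show ?thesis using that by (simp add: field_simps)
  qed
  then show "(\<lambda>n. a + p * z^n + q * inverse z ^ n) \<longlonglongrightarrow> 0"
    by (intro Lim_null_comparison[OF _ lim_const_over_n[of K]])
      (auto intro!: eventually_sequentiallyI[of 1])
qed

section \<open>Derivatives of words\<close>

lemma word_val_append: "word_val L M (u @ w) t = word_val L M u t ** word_val L M w t"
  by (induction u) (auto simp: matrix_mul_assoc)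

fun word_deriv :: "(letter \<Rightarrow> cmat3) \<Rightarrow> (real \<Rightarrow> cmat3) \<Rightarrow> (real \<Rightarrow> cmat3) \<Rightarrow> real
    \<Rightarrow> letter list \<Rightarrow> cmat3" where
  "word_deriv dl L M t [] = 0"
| "word_deriv dl L M t (x # xs) =
    dl x ** word_val L M xs t + letter_val L M x t ** word_deriv dl L M t xs"

lemma has_vector_derivative_word_val:
  assumes "\<And>x. (letter_val L M x has_vector_derivative dl x) (at t)"
  shows "(word_val L M w has_vector_derivative word_deriv dl L M t w) (at t)"
proof (induction w)
  case Nil
  then show ?case by (simp add: has_vector_derivative_const)
next
  case (Cons x xs)
  have "word_val L M (x # xs) = (\<lambda>s. letter_val L M x s ** word_val L M xs s)" by auto
  then show ?case
    using bounded_bilinear.has_vector_derivative[OF bounded_bilinear_matrix_mult assms Cons.IH]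
    by (simp add: add.commute)
qed

lemma trace_word_deriv_eq_zero:
  assumes "\<And>x. (letter_val L M x has_vector_derivative dl x) (at t)"
    and "((\<lambda>s. trace (word_val L M w s)) has_vector_derivative 0) (at t)"
  shows "trace (word_deriv dl L M t w) = 0"
  using bounded_linear.has_vector_derivative[OF bounded_linear_trace
      has_vector_derivative_word_val[OF assms(1)]] assms(2)
  by (rule vector_derivative_unique_at)

lemma word_val_replicate_commute:
  assumes "letter_val L M x t ** X = X ** letter_val L M x t"
  shows "word_val L M (replicate n x) t ** X = X ** word_val L M (replicate n x) t"
proof (induction n)
  case (Suc n)
  then show ?case by (simp add: matrix_mul_assoc) (metis assms matrix_mul_assoc)
qed simp

lemma word_deriv_replicate_append:
  assumes dl: "dl x = letter_val L M x t ** X"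
    and commute: "letter_val L M x t ** X = X ** letter_val L M x t"
  shows "word_deriv dl L M t (replicate n x @ w) =
    real n *\<^sub>R (word_val L M (replicate n x) t ** X ** word_val L M w t)
      + word_val L M (replicate n x) t ** word_deriv dl L M t w"
proof (induction n)
  case (Suc n)
  let ?A = "letter_val L M x t" and ?P = "word_val L M (replicate n x) t"
    and ?W = "word_val L M w t"
  have "?A ** X ** (?P ** ?W) = ?A ** ?P ** X ** ?W"
    using word_val_replicate_commute[OF commute] by (metis matrix_mul_assoc)
  with Suc show ?case
    by (simp add: dl word_val_append matrix_add_ldistrib matrix_add_rdistrib matrix_scalar_ac
        scalar_matrix_assoc matrix_mul_assoc scaleR_add_left algebra_simps)
qed simp

text \<open>Inversion on \<open>SU(3)\<close> is the linear map \<^const>\<open>adj3\<close>, so the inverse letters are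
  differentiated through it.\<close>

definition letter_deriv :: "(real \<Rightarrow> cmat3) \<Rightarrow> (real \<Rightarrow> cmat3) \<Rightarrow> real \<Rightarrow> letter \<Rightarrow> cmat3" where
  "letter_deriv L M t x = (case x of
      Lp \<Rightarrow> vector_derivative L (at t) | Li \<Rightarrow> adj3 (vector_derivative L (at t))
    | Mp \<Rightarrow> vector_derivative M (at t) | Mi \<Rightarrow> adj3 (vector_derivative M (at t)))"

lemma smooth_on_has_vector_derivative:
  assumes "smooth_on S f" and "open S" and "t \<in> S"
  shows "(f has_vector_derivative vector_derivative f (at t)) (at t)"
proof -
  obtain D where "D 0 = f" and "\<forall>k. \<forall>s\<in>S. (D k has_vector_derivative D (Suc k) s) (at s within S)"
    using assms(1) unfolding smooth_on_def by blast
  then have "(f has_vector_derivative D 1 t) (at t)"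
    using assms(2,3) by (metis One_nat_def has_vector_derivative_within_open)
  then show ?thesis by (simp add: vector_derivative_at)
qed

lemma has_vector_derivative_matrix_inv_SU3:
  assumes "open S" and "t \<in> S" and "\<forall>s\<in>S. A s \<in> SU3" and "(A has_vector_derivative D) (at t)"
  shows "((\<lambda>s. matrix_inv (A s)) has_vector_derivative adj3 D) (at t)"
  using bounded_linear.has_vector_derivative[OF bounded_linear_adj3 assms(4)] assms(1,2)
  by (rule has_vector_derivative_transform_within_open) (simp add: assms(3) matrix_inv_SU3)

lemma letter_val_has_letter_deriv:
  assumes "open S" and "t \<in> S" and "smooth_on S L" and "smooth_on S M"
    and "\<forall>s\<in>S. L s \<in> SU3" and "\<forall>s\<in>S. M s \<in> SU3"
  shows "(letter_val L M x has_vector_derivative letter_deriv L M t x) (at t)"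
proof -
  have L: "(L has_vector_derivative vector_derivative L (at t)) (at t)"
    and M: "(M has_vector_derivative vector_derivative M (at t)) (at t)"
    using assms(1-4) by (simp_all add: smooth_on_has_vector_derivative)
  have "letter_val L M Lp = L" "letter_val L M Li = (\<lambda>s. matrix_inv (L s))"
    "letter_val L M Mp = M" "letter_val L M Mi = (\<lambda>s. matrix_inv (M s))"
    by (simp_all add: fun_eq_iff)
  then show ?thesis
    by (cases x) (simp_all add: letter_deriv_def L M
        has_vector_derivative_matrix_inv_SU3[OF assms(1,2,5) L]
        has_vector_derivative_matrix_inv_SU3[OF assms(1,2,6) M])
qed

section \<open>Conjugation by the diagonal torus\<close>

definition diag3 :: "complex \<Rightarrow> complex \<Rightarrow> complex \<Rightarrow> cmat3" where
  "diag3 a b c = mat3 a 0 0 0 b 0 0 0 c"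

lemma diag3_mult: "diag3 a b c ** diag3 a' b' c' = diag3 (a * a') (b * b') (c * c')"
  by (simp add: diag3_def mat3_mult)

lemma diag3_commute: "diag3 a b c ** diag3 a' b' c' = diag3 a' b' c' ** diag3 a b c"
  by (simp add: diag3_mult mult.commute)

lemma adj3_diag3: "adj3 (diag3 a b c) = diag3 (cnj a) (cnj b) (cnj c)"
  by (simp add: diag3_def adj3_mat3)

lemma uminus_diag3: "- diag3 a b c = diag3 (- a) (- b) (- c)"
  by (simp add: diag3_def mat3_eq_iff)

definition torus :: "complex \<Rightarrow> cmat3" where
  "torus u = diag3 u u (inverse (u^2))"

lemma torus_mult: "torus u ** torus v = torus (u * v)"
  by (simp add: torus_def diag3_mult power_mult_distrib)

lemma torus_one: "torus 1 = mat 1"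
  by (simp add: torus_def diag3_def mat3_one)

lemma matrix_inv_torus: "u \<noteq> 0 \<Longrightarrow> matrix_inv (torus u) = torus (inverse u)"
  by (simp add: matrix_inv_eqI torus_mult torus_one)

text \<open>The pairing \<open>trace (Y ** Z)\<close> split according to the weight \<open>0\<close>, \<open>3\<close> or \<open>-3\<close> with which
  conjugation by \<open>torus u\<close> scales the entries of \<open>Y\<close>.\<close>

definition pairing0 :: "cmat3 \<Rightarrow> cmat3 \<Rightarrow> complex" where
  "pairing0 Y Z = Y$1$1 * Z$1$1 + Y$1$2 * Z$2$1 + Y$2$1 * Z$1$2 + Y$2$2 * Z$2$2 + Y$3$3 * Z$3$3"

definition pairing_up :: "cmat3 \<Rightarrow> cmat3 \<Rightarrow> complex" where
  "pairing_up Y Z = Y$1$3 * Z$3$1 + Y$2$3 * Z$3$2"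

definition pairing_down :: "cmat3 \<Rightarrow> cmat3 \<Rightarrow> complex" where
  "pairing_down Y Z = Y$3$1 * Z$1$3 + Y$3$2 * Z$2$3"

lemma trace_torus_conj:
  assumes "u \<noteq> 0"
  shows "trace (torus u ** Y ** torus (inverse u) ** Z) =
    pairing0 Y Z + u^3 * pairing_up Y Z + inverse u ^ 3 * pairing_down Y Z"
  using assms
  by (subst mat3_entries[of Y], subst mat3_entries[of Z])
    (simp add: torus_def diag3_def mat3_mult trace_mat3 pairing0_def pairing_up_def
        pairing_down_def,
      simp add: field_simps power2_eq_square power3_eq_cube)

lemma trace_torus_mult: "trace (torus u ** Y) = u * (Y$1$1 + Y$2$2) + inverse (u^2) * Y$3$3"
  by (subst mat3_entries[of Y]) (simp add: torus_def diag3_def mat3_mult trace_mat3 algebra_simps)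

lemma pairings_diag3_commutator:
  fixes M Z :: cmat3 and k :: complex
  defines "Y \<equiv> diag3 k (- k) 0 ** M - M ** diag3 k (- k) 0"
  shows "pairing0 Y Z = 2 * k * (M$1$2 * Z$2$1 - M$2$1 * Z$1$2)"
    and "pairing_up Y Z = k * (M$1$3 * Z$3$1 - M$2$3 * Z$3$2)"
    and "pairing_down Y Z = k * (M$3$2 * Z$2$3 - M$3$1 * Z$1$3)"
  unfolding Y_def
  by (subst (1 2) mat3_entries[of M], simp add: diag3_def mat3_mult pairing0_def pairing_up_def
      pairing_down_def algebra_simps)+

lemma word_val_replicate_torus:
  "letter_val L M x t = torus u \<Longrightarrow> word_val L M (replicate n x) t = torus (u ^ n)"
  by (induction n) (simp_all add: torus_mult torus_one)

lemma word_deriv_conjugate: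
  fixes L M :: "real \<Rightarrow> cmat3" and lam :: complex and n :: nat and B :: "letter list"
  assumes Lp: "L t = torus lam" and "lam \<noteq> 0"
    and dLp: "dl Lp = torus lam ** X" and dLi: "dl Li = torus (inverse lam) ** (- X)"
    and X: "X = diag3 x1 x2 x3"
  defines "P \<equiv> torus (lam ^ n)" and "Q \<equiv> torus (inverse lam ^ n)"
    and "M0 \<equiv> M t" and "B0 \<equiv> word_val L M B t"
  shows "word_deriv dl L M t (replicate n Lp @ Mp # replicate n Li @ B) =
    real n *\<^sub>R (P ** (X ** M0 - M0 ** X) ** Q ** B0)
      + P ** dl Mp ** Q ** B0 + P ** M0 ** Q ** word_deriv dl L M t B"
proof -
  have P: "word_val L M (replicate n Lp) t = P" and Q: "word_val L M (replicate n Li) t = Q"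
    using word_val_replicate_torus[of L M Lp t lam n]
      word_val_replicate_torus[of L M Li t "inverse lam" n]
    by (simp_all add: P_def Q_def Lp matrix_inv_torus \<open>lam \<noteq> 0\<close>)
  have "Q ** X = X ** Q" by (simp add: Q_def X torus_def diag3_commute)
  have "torus lam ** X = X ** torus lam"
    and "torus (inverse lam) ** - X = - X ** torus (inverse lam)"
    unfolding X torus_def uminus_diag3 by (simp_all add: diag3_commute)
  then have "word_deriv dl L M t (replicate n Lp @ Mp # replicate n Li @ B) =
      real n *\<^sub>R (P ** X ** (M0 ** (Q ** B0))) + P ** (dl Mp ** (Q ** B0)
        + M0 ** (real n *\<^sub>R (Q ** - X ** B0) + Q ** word_deriv dl L M t B))"
    using word_deriv_replicate_append[of dl Lp L M t X n]
      word_deriv_replicate_append[of dl Li L M t "- X" n B]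
    by (simp add: Lp matrix_inv_torus \<open>lam \<noteq> 0\<close> dLp dLi P Q word_val_append M0_def B0_def)
  also have "\<dots> = real n *\<^sub>R (P ** (X ** M0 - M0 ** X) ** Q ** B0)
      + P ** dl Mp ** Q ** B0 + P ** M0 ** Q ** word_deriv dl L M t B"
    by (simp add: \<open>Q ** X = X ** Q\<close> matrix_add_ldistrib matrix_diff_ldistrib matrix_diff_rdistrib
        matrix_scalar_ac scalar_matrix_assoc matrix_mul_assoc matrix_mul_uminus_left
        matrix_mul_uminus_right algebra_simps)
  finally show ?thesis .
qed

lemma commutator_pairings_vanish:
  fixes L M :: "real \<Rightarrow> cmat3" and lam :: complex
  assumes "cmod lam = 1" and "lam ^ 6 \<noteq> 1"
    and Lp: "L t = torus lam"
    and dLp: "dl Lp = torus lam ** X" and dLi: "dl Li = torus (inverse lam) ** (- X)"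
    and X: "X = diag3 x1 x2 x3"
    and trace0: "\<And>w. trace (word_deriv dl L M t w) = 0"
  defines "Y \<equiv> X ** M t - M t ** X"
  shows "pairing0 Y (word_val L M B t) = 0 \<and> pairing_up Y (word_val L M B t) = 0
    \<and> pairing_down Y (word_val L M B t) = 0"
proof -
  let ?B0 = "word_val L M B t" and ?dB = "word_deriv dl L M t B"
  let ?a = "pairing0 Y ?B0" and ?p = "pairing_up Y ?B0" and ?q = "pairing_down Y ?B0"
  let ?a' = "pairing0 (dl Mp) ?B0 + pairing0 (M t) ?dB"
    and ?p' = "pairing_up (dl Mp) ?B0 + pairing_up (M t) ?dB"
    and ?q' = "pairing_down (dl Mp) ?B0 + pairing_down (M t) ?dB"
  have "lam \<noteq> 0" using assms(1) by auto
  define z where "z = lam ^ 3"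
  have "cmod z = 1" using assms(1) by (simp add: z_def norm_power)
  have "z^2 \<noteq> 1" using assms(2) by (simp add: z_def power_mult[symmetric])
  have "of_nat n * (?a + ?p * z^n + ?q * inverse z ^ n)
      + (?a' + ?p' * z^n + ?q' * inverse z ^ n) = 0" for n
  proof -
    let ?P = "torus (lam ^ n)" and ?Q = "torus (inverse (lam ^ n))"
    have z_n: "(lam ^ n) ^ 3 = z ^ n"
      by (simp add: z_def power_mult[symmetric] mult.commute)
    have "0 = trace (word_deriv dl L M t (replicate n Lp @ Mp # replicate n Li @ B))"
      by (simp add: trace0)
    also have "\<dots> = of_nat n * trace (?P ** Y ** ?Q ** ?B0) + trace (?P ** dl Mp ** ?Q ** ?B0)
        + trace (?P ** M t ** ?Q ** ?dB)"
      by (simp add: word_deriv_conjugate[of L t lam, OF Lp \<open>lam \<noteq> 0\<close> dLp dLi X] Y_def trace_add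
          trace_scaleR power_inverse) (simp add: scaleR_conv_of_real)
    also have "\<dots> = of_nat n * (?a + ?p * z^n + ?q * inverse z ^ n)
        + (?a' + ?p' * z^n + ?q' * inverse z ^ n)"
      using \<open>lam \<noteq> 0\<close> z_n by (simp add: trace_torus_conj power_inverse algebra_simps)
    finally show ?thesis by simp
  qed
  then show ?thesis
    using trinomial_eq_zero_if_linear_growth_cancels[OF \<open>cmod z = 1\<close> \<open>z^2 \<noteq> 1\<close>] by blast
qed

lemma diagonal_pairing_vanishes:
  fixes L M :: "real \<Rightarrow> cmat3" and lam :: complex
  assumes "cmod lam = 1" and "lam ^ 6 \<noteq> 1"
    and Lp: "L t = torus lam" and dLp: "dl Lp = torus lam ** diag3 x1 x2 x3"
    and trace0: "\<And>w. trace (word_deriv dl L M t w) = 0"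
  shows "x1 * M t $ 1 $ 1 + x2 * M t $ 2 $ 2 = 0"
proof -
  have "lam \<noteq> 0" using assms(1) by auto
  define z where "z = lam ^ 3"
  have "cmod z = 1" using assms(1) by (simp add: z_def norm_power)
  have "z^2 \<noteq> 1" using assms(2) by (simp add: z_def power_mult[symmetric])
  let ?c = "x1 * M t $ 1 $ 1 + x2 * M t $ 2 $ 2" and ?dM = "dl Mp"
  have "of_nat n * (?c + 0 * z^n + x3 * M t $ 3 $ 3 * inverse z ^ n)
      + ((?dM $ 1 $ 1 + ?dM $ 2 $ 2) + 0 * z^n + ?dM $ 3 $ 3 * inverse z ^ n) = 0" for n
  proof -
    let ?u = "lam ^ n"
    have z_n: "?u ^ 3 = z ^ n"
      by (simp add: z_def mult.commute flip: power_mult)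
    have "0 = inverse ?u * trace (word_deriv dl L M t (replicate n Lp @ [Mp]))"
      by (simp add: trace0)
    also have "\<dots> = inverse ?u * (of_nat n * trace (torus ?u ** (diag3 x1 x2 x3 ** M t))
        + trace (torus ?u ** ?dM))"
      using word_deriv_replicate_append[of dl Lp L M t "diag3 x1 x2 x3" n "[Mp]"]
        word_val_replicate_torus[of L M Lp t lam n]
      by (simp add: Lp dLp torus_def diag3_commute trace_add trace_scaleR matrix_mul_assoc)
        (simp add: scaleR_conv_of_real)
    also have "\<dots> = of_nat n * (?c + 0 * z^n + x3 * M t $ 3 $ 3 * inverse (?u ^ 3))
      + ((?dM $ 1 $ 1 + ?dM $ 2 $ 2) + 0 * z^n + ?dM $ 3 $ 3 * inverse (?u ^ 3))"
      using \<open>lam \<noteq> 0\<close>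
      by (subst (1 2) mat3_entries[of "M t"])
        (simp add: trace_torus_mult diag3_def mat3_mult field_simps power2_eq_square power3_eq_cube)
    finally show ?thesis by (simp add: z_n power_inverse)
  qed
  then show ?thesis
    using trinomial_eq_zero_if_linear_growth_cancels[OF \<open>cmod z = 1\<close> \<open>z^2 \<noteq> 1\<close>] by blast
qed

section \<open>Locating the phase\<close>

lemma norm_eq_1_imp_cis:
  assumes "cmod w = 1" shows "\<exists>th\<in>{0..<2*pi}. w = cis th"
proof
  show "w = cis (Arg2pi w)" using assms complex_norm_eq_1_exp[of w] by (simp add: cis_conv_exp)
qed (use Arg2pi[of w] in auto)

lemma mat3_G_eta_form:
  assumes "m11 = m22" and "m21 * cis (- eta) = m12 * cis eta"
    and "m23 = m13 * cis eta" and "m32 = m31 * cis (- eta)"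
  shows "\<exists>a b c c' d. mat3 m11 m12 m13 m21 m22 m23 m31 m32 m33 =
    mat3 a (b * cis (- eta)) c (b * cis eta) a (c * cis eta) c' (c' * cis (- eta)) d"
proof (intro exI)
  have "m12 * cis eta * cis eta = m21 * cis (- eta) * cis eta" using assms(2) by simp
  also have "\<dots> = m21" by (simp add: mult.assoc cis_mult)
  finally show "mat3 m11 m12 m13 m21 m22 m23 m31 m32 m33 =
    mat3 m11 (m12 * cis eta * cis (- eta)) m13 (m12 * cis eta * cis eta) m11 (m13 * cis eta)
      m31 (m31 * cis (- eta)) m33"
    using assms by (simp add: mat3_eq_iff mult.assoc cis_mult)
qed

lemma common_phase_exists:
  fixes m12 m13 m21 m23 m31 m32 :: complex
  assumes "cmod m21 = cmod m12" and "cmod m23 = cmod m13" and "cmod m32 = cmod m31"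
    and "cmod m31 = cmod m13"
    and "m13 * m31 = m23 * m32" and "m12 * m23 * m31 = m21 * m13 * m32"
  shows "\<exists>eta\<in>{0..<2*pi}. m21 * cis (- eta) = m12 * cis eta \<and> m23 = m13 * cis eta
    \<and> m32 = m31 * cis (- eta)"
proof (cases "m13 = 0")
  case True
  then have "m23 = 0" "m31 = 0" "m32 = 0" using assms(2-4) by auto
  show ?thesis
  proof (cases "m12 = 0")
    case True
    then show ?thesis
      using assms(1) \<open>m13 = 0\<close> \<open>m23 = 0\<close> \<open>m31 = 0\<close> \<open>m32 = 0\<close> by (intro bexI[of _ 0]) auto
  next
    case False
    obtain th where th: "th \<in> {0..<2*pi}" "m21 / m12 = cis th"
      using norm_eq_1_imp_cis[of "m21 / m12"] assms(1) False by (auto simp: norm_divide)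
    have "m21 * cis (- (th/2)) = m12 * cis th * cis (- (th/2))"
      using th(2) False by (simp add: field_simps)
    also have "\<dots> = m12 * cis (th/2)" by (simp add: mult.assoc cis_mult)
    finally show ?thesis
      using th(1) \<open>m13 = 0\<close> \<open>m23 = 0\<close> \<open>m31 = 0\<close> \<open>m32 = 0\<close> by (intro bexI[of _ "th/2"]) auto
  qed
next
  case False
  then have "m31 \<noteq> 0" using assms(4) by auto
  obtain eta where eta: "eta \<in> {0..<2*pi}" "m23 / m13 = cis eta"
    using norm_eq_1_imp_cis[of "m23 / m13"] assms(2) False by (auto simp: norm_divide)
  have m23: "m23 = m13 * cis eta" using eta(2) False by (simp add: field_simps)
  have "m31 = cis eta * m32"
    using assms(5) False by (simp add: m23 mult.assoc)
  then have m32: "m32 = m31 * cis (- eta)"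
    by (simp add: mult.assoc mult.commute[of _ "cis (- eta)"] cis_mult mult.left_commute)
  have "m13 * m31 * (m12 * cis eta) = m13 * m31 * (m21 * cis (- eta))"
    using assms(6) by (simp add: m23 m32 algebra_simps)
  then have "m21 * cis (- eta) = m12 * cis eta" using False \<open>m31 \<noteq> 0\<close> by simp
  then show ?thesis using eta(1) m23 m32 by blast
qed

lemma SU3_norm_entry13_eq_entry31:
  assumes "A \<in> SU3" and "cmod (A$2$3) = cmod (A$1$3)" and "cmod (A$3$2) = cmod (A$3$1)"
  shows "cmod (A$3$1) = cmod (A$1$3)"
proof -
  have row: "A ** adj3 A = mat 1" using assms(1) by (simp add: SU3_def)
  then have col: "adj3 A ** A = mat 1" using matrix_left_right_inverse by blast
  have "A$3$1 * cnj (A$3$1) + A$3$2 * cnj (A$3$2) + A$3$3 * cnj (A$3$3) = 1"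
    using arg_cong[OF row, of "\<lambda>B. B$3$3"]
    by (simp add: matrix_matrix_mult_def sum_3 adj3_def mat_def)
  then have "(cmod (A$3$1))^2 + (cmod (A$3$2))^2 + (cmod (A$3$3))^2 = 1"
    unfolding complex_norm_square[symmetric] by (metis of_real_add of_real_eq_1_iff)
  moreover have "A$1$3 * cnj (A$1$3) + A$2$3 * cnj (A$2$3) + A$3$3 * cnj (A$3$3) = 1"
    using arg_cong[OF col, of "\<lambda>B. B$3$3"]
    by (simp add: matrix_matrix_mult_def sum_3 adj3_def mat_def mult.commute)
  then have "(cmod (A$1$3))^2 + (cmod (A$2$3))^2 + (cmod (A$3$3))^2 = 1"
    unfolding complex_norm_square[symmetric] by (metis of_real_add of_real_eq_1_iff)
  ultimately have "(cmod (A$3$1))^2 = (cmod (A$1$3))^2"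
    unfolding assms(2,3) by linarith
  then show ?thesis by (simp add: power2_eq_iff_nonneg)
qed

lemma mult_cnj_eq_iff_norm_eq: "z * cnj z = w * cnj w \<longleftrightarrow> cmod z = cmod w"
  by (simp only: complex_norm_square[symmetric] of_real_eq_iff) (simp add: power2_eq_iff_nonneg)

lemma G_eta_if_commutator_pairings_vanish:
  fixes A :: cmat3 and k :: complex
  defines "Y \<equiv> diag3 k (- k) 0 ** A - A ** diag3 k (- k) 0"
  assumes "A \<in> SU3" and "k \<noteq> 0" and "A$1$1 = A$2$2"
    and "pairing0 Y (adj3 A) = 0" and "pairing_up Y (adj3 A) = 0" and "pairing_down Y (adj3 A) = 0"
    and "pairing_up Y A = 0" and "pairing0 Y (A ** A) = 0"
  shows "\<exists>eta\<in>{0..<2*pi}. A \<in> G_eta eta"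
proof -
  have "cmod (A$2$1) = cmod (A$1$2)" "cmod (A$2$3) = cmod (A$1$3)" "cmod (A$3$2) = cmod (A$3$1)"
    using assms(3,5-7) unfolding Y_def pairings_diag3_commutator
    by (simp_all add: adj3_def mult_cnj_eq_iff_norm_eq[symmetric])
  moreover have "A$1$3 * A$3$1 = A$2$3 * A$3$2"
    using assms(3,8) unfolding Y_def pairings_diag3_commutator by simp
  moreover have "A$1$2 * A$2$3 * A$3$1 = A$2$1 * A$1$3 * A$3$2"
    using assms(3,4,9) unfolding Y_def pairings_diag3_commutator
    by (simp add: matrix_matrix_mult_def sum_3 algebra_simps)
  ultimately obtain eta where "eta \<in> {0..<2*pi}" and
    "A$2$1 * cis (- eta) = A$1$2 * cis eta" "A$2$3 = A$1$3 * cis eta" "A$3$2 = A$3$1 * cis (- eta)"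
    using common_phase_exists SU3_norm_entry13_eq_entry31[OF assms(2)] by meson
  then have "\<exists>a b c c' d.
      mat3 (A$1$1) (A$1$2) (A$1$3) (A$2$1) (A$2$2) (A$2$3) (A$3$1) (A$3$2) (A$3$3) =
      mat3 a (b * cis (- eta)) c (b * cis eta) a (c * cis eta) c' (c' * cis (- eta)) d"
    by (intro mat3_G_eta_form assms(4))
  then have "A \<in> G_eta eta"
    using assms(2) unfolding G_eta_def by (simp only: mat3_entries[symmetric]) blast
  then show ?thesis using \<open>eta \<in> {0..<2*pi}\<close> by blast
qed

theorem lemma6p6:
  fixes L M :: "real \<Rightarrow> complex^3^3" and eps alpha :: real and lam :: complex
  assumes epsP: "eps > 0"
    and smoothL: "smooth_on {-eps<..<eps} L" and smoothM: "smooth_on {-eps<..<eps} M"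
    and SUL: "\<forall>t\<in>{-eps<..<eps}. L t \<in> SU3" and SUM: "\<forall>t\<in>{-eps<..<eps}. M t \<in> SU3"
    and lam_mod: "cmod lam = 1"
    and lam_ord: "\<forall>n::nat. n > 0 \<longrightarrow> lam ^ n \<noteq> 1"
    and alphaP: "alpha \<noteq> 0"
    and L0: "L 0 = mat3 lam 0 0  0 lam 0  0 0 (inverse (lam^2))"
    and L'0: "matrix_inv (L 0) ** vector_derivative L (at 0)
              = mat3 (\<i> * of_real alpha) 0 0  0 (- \<i> * of_real alpha) 0  0 0 0"
    and words: "\<forall>w::letter list. ((\<lambda>t. trace (word_val L M w t)) has_vector_derivative 0) (at 0)"
  shows "\<exists>eta\<in>{0..<2*pi}. M 0 \<in> G_eta eta"
proof -
  have S: "open {-eps<..<eps}" "0 \<in> {-eps<..<eps}" using epsP by auto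
  define dl where "dl = letter_deriv L M 0"
  have trace0: "trace (word_deriv dl L M 0 w) = 0" for w
    using words letter_val_has_letter_deriv[OF S smoothL smoothM SUL SUM]
    by (simp add: dl_def trace_word_deriv_eq_zero)
  have "lam \<noteq> 0" using lam_mod by auto
  have "lam ^ 6 \<noteq> 1" using lam_ord by simp
  have L0: "L 0 = torus lam" using L0 by (simp add: torus_def diag3_def)
  define X where "X = diag3 (\<i> * of_real alpha) (- (\<i> * of_real alpha)) 0"
  have dLp: "dl Lp = torus lam ** X"
    using arg_cong[OF L'0, of "\<lambda>B. torus lam ** B"] \<open>lam \<noteq> 0\<close>
    by (simp add: dl_def letter_deriv_def L0 matrix_inv_torus matrix_mul_assoc torus_mult torus_one
        X_def diag3_def)
  have "cnj lam = inverse lam"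
    using complex_norm_square[of lam] lam_mod by (simp add: inverse_unique)
  then have dLi: "dl Li = torus (inverse lam) ** (- X)"
    using dLp
    by (simp add: dl_def letter_deriv_def X_def torus_def diag3_mult adj3_diag3 uminus_diag3)
  note pairings = commutator_pairings_vanish[OF lam_mod \<open>lam ^ 6 \<noteq> 1\<close> L0 dLp dLi X_def trace0]
  have "M 0 $ 1 $ 1 = M 0 $ 2 $ 2"
    using diagonal_pairing_vanishes[OF lam_mod \<open>lam ^ 6 \<noteq> 1\<close> L0 dLp[unfolded X_def] trace0] alphaP
    by (simp add: algebra_simps)
  moreover have "word_val L M [Mi] 0 = adj3 (M 0)"
    using SUM S by (simp add: matrix_inv_SU3)
  ultimately show ?thesis
    using pairings[of "[Mi]"] pairings[of "[Mp]"] pairings[of "[Mp, Mp]"] SUM S alphaP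
    by (intro G_eta_if_commutator_pairings_vanish[of "M 0" "\<i> * of_real alpha"])
      (simp_all add: X_def)
qed

end
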